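(* Assume that $\{Z_i\}_{i\ge 0}$ is a stationary Markov chain on $(\mathsf{Z},\mathcal{Z})$ with Markov kernel $\mathrm{Q}$ and unique invariant distribution $\pi$, and that $\mathrm{Q}$ is uniformly geometrically ergodic with mixing time $\tau\in\mathbb{N}$, i.e. for every $k\in\mathbb{N}$, $$\sup_{z,z'\in\mathsf{Z}}\tfrac12\|\mathrm{Q}^k(z,\cdot)-\mathrm{Q}^k(z',\cdot)\|_{\mathsf{TV}}\le (1/4)^{\lfloor k/\tau\rfloor}.$$ Assume further that for all $x\in\mathbb{R}^d$, $\mathbb{E}_{\pi}[\nabla F(x,Z)]=\nabla f(x)$, and for all $z\in\mathsf{Z}$ and $x\in\mathbb{R}^d$, $$\|\nabla F(x,z)-\nabla f(x)\|^2\le \sigma^2+\delta^2\|\nabla f(x)\|^2 .$$ Then for any $n\ge 1$ and $x\in\mathbb{R}^d$, $$\mathbb{E}_{\pi}\Big[\Big\|\tfrac1n\sum_{i=1}^n\nabla F(x,Z_i)-\nabla f(x)\Big\|^2\Big]\le \frac{8\tau}{n}\big(\sigma^2+\delta^2\|\nabla f(x)\|^2\big),$$ and moreover, for any initial distribution $\xi$ on $(\mathsf{Z},\mathcal{Z})$, $$\mathbb{E}_{\xi}\Big[\Big\|\tfrac1n\sum_{i=1}^n\nabla F(x,Z_i)-\nabla f(x)\Big\|^2\Big]\le \frac{C_1\tau}{n}\big(\sigma^2+\delta^2\|\nabla f(x)\|^2\big),\qquad C_1=16\Big(1+\frac{1}{\ln^2 4}\Big).$$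
   Context: $(\mathsf{Z},\mathcal{Z})$ is a complete separable metric space with its Borel $\sigma$-field. $\mathbb{P}_\xi,\mathbb{E}_\xi$ denote the law and expectation of the Markov chain $(Z_i)$ with kernel $\mathrm{Q}$ started from the initial distribution $\xi$; $\mathbb{E}_\pi$ is the stationary case. $\|\cdot\|_{\mathsf{TV}}$ is the total variation norm of a signed measure. $f:\mathbb{R}^d\to\mathbb{R}$ is defined by $f(x)=\mathbb{E}_{Z\sim\pi}[F(x,Z)]$, where $F(\cdot,z)$ is differentiable for each $z$, and $\sigma\ge0,\delta\ge0$ are constants. *)

theory Defs
  imports "HOL-Analysis.Analysis" "HOL-Probability.Probability"
begin

text \<open>Total variation norm of the signed measure mu - nu (for finite measures on the
  same sigma-algebra): the supremum over measurable |g| <= 1 of |mu g - nu g|,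
  which equals 2 * sup_A |mu A - nu A|.\<close>
definition tv_norm :: "'a measure \<Rightarrow> 'a measure \<Rightarrow> real" where
  "tv_norm \<mu> \<nu> = 2 * (SUP A \<in> sets \<mu>. \<bar>measure \<mu> A - measure \<nu> A\<bar>)"

primrec kernel_pow :: "'z measure \<Rightarrow> ('z \<Rightarrow> 'z measure) \<Rightarrow> nat \<Rightarrow> 'z \<Rightarrow> 'z measure" where
  "kernel_pow M Q 0 = (\<lambda>z. return M z)"
| "kernel_pow M Q (Suc k) = (\<lambda>z. bind (kernel_pow M Q k z) Q)"

text \<open>Law of (Z_0, ..., Z_n) of the Markov chain with kernel Q started from xi,
  as a measure on functions {..n} -> Z.\<close>
primrec chain_law :: "'z measure \<Rightarrow> ('z \<Rightarrow> 'z measure) \<Rightarrow> 'z measure \<Rightarrow> nat \<Rightarrow> (nat \<Rightarrow> 'z) measure" where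
  "chain_law M Q \<xi> 0 = distr \<xi> (PiM {..0} (\<lambda>_. M)) (\<lambda>z. \<lambda>i\<in>{..0::nat}. z)"
| "chain_law M Q \<xi> (Suc n) =
     bind (chain_law M Q \<xi> n)
       (\<lambda>w. distr (Q (w n)) (PiM {..Suc n} (\<lambda>_. M)) (\<lambda>z. w(Suc n := z)))"

end

theory Submission
  imports Defs
begin

(* Write g = gradF x - gradf x: it is centred under \<pi> and (norm g)\<^sup>2 is bounded by
   B = \<sigma>\<^sup>2 + \<delta>\<^sup>2 (norm (gradf x))\<^sup>2.  Expanding the square, the mean squared error is
   n\<^sup>-\<^sup>2 times the sum over i, j of E[g(Z_i) \<bullet> g(Z_j)].  Conditioning on Z_i turns the term
   with i \<le> j into E[(Q\<^sup>k h)(Z_i)] with k = j - i and h = g(Z_i) \<bullet> g(.), a function that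
   is centred under \<pi>; since \<pi> is invariant, (Q\<^sup>k h)(z) is an average over \<pi> of
   differences (Q\<^sup>k h)(z) - (Q\<^sup>k h)(y), so the mixing assumption bounds it by
   2 B (1/4)\<^bsup>\<lfloor>k/\<tau>\<rfloor>\<^esup>.  Summing the geometric series over j gives at most
   16 \<tau> B / 3 per row, hence the bound 8 \<tau> B / n.  Nothing here depends on the initial law,
   so the same bound holds for every \<xi>, and 8 \<le> C\<^sub>1. *)

section \<open>Total variation\<close>

lemma (in prob_space) abs_integral_le_const:
  fixes f :: "'a \<Rightarrow> real"
  assumes bound: "\<And>x. x \<in> space M \<Longrightarrow> \<bar>f x\<bar> \<le> C"
  shows "\<bar>integral\<^sup>L M f\<bar> \<le> C"
proof (cases "integrable M f")
  case True
  have "\<bar>integral\<^sup>L M f\<bar> \<le> (\<integral>x. \<bar>f x\<bar> \<partial>M)"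
    by (rule integral_abs_bound)
  also have "\<dots> \<le> C"
    using True bound by (intro integral_le_const) auto
  finally show ?thesis .
next
  case False
  obtain x where "x \<in> space M"
    using not_empty by blast
  with bound show ?thesis
    using False by (fastforce simp: not_integrable_integral_eq)
qed

lemma card_le_real_eq_nat_floor:
  fixes t :: real
  assumes "0 \<le> t" "t \<le> real N"
  shows "card {k \<in> {1..N}. real k \<le> t} = nat \<lfloor>t\<rfloor>"
proof -
  have "{k \<in> {1..N}. real k \<le> t} = {1..nat \<lfloor>t\<rfloor>}"
    using assms by (auto simp: le_nat_floor) linarith+
  then show ?thesis
    by simp
qed

lemma (in prob_space) integral_level_sets_approx:
  fixes u :: "'a \<Rightarrow> real"
  assumes u: "u \<in> borel_measurable M" "\<And>x. x \<in> space M \<Longrightarrow> 0 \<le> u x \<and> u x \<le> 1"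
    and N: "N \<ge> 1"
  shows "\<bar>expectation u - (\<Sum>k=1..N. prob {x \<in> space M. real k \<le> real N * u x}) / real N\<bar>
           \<le> 1 / real N"
proof -
  let ?A = "\<lambda>k. {x \<in> space M. real k \<le> real N * u x}"
  let ?v = "\<lambda>x. (\<Sum>k=1..N. indicator (?A k) x) / real N :: real"
  have A: "?A k \<in> events" for k
    using u(1) by measurable
  have count: "(\<Sum>k=1..N. indicator (?A k) x) = real_of_int \<lfloor>real N * u x\<rfloor>"
    if "x \<in> space M" for x
  proof -
    have "(\<Sum>k=1..N. indicator (?A k) x :: real) = card {k \<in> {1..N}. real k \<le> real N * u x}"
      using that by (simp add: indicator_def sum.If_cases Int_def)
    also have "\<dots> = nat \<lfloor>real N * u x\<rfloor>"
      using u(2)[OF that] by (intro arg_cong[where f=real] card_le_real_eq_nat_floor) (auto intro: mult_left_le)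
    finally show ?thesis
      using u(2)[OF that] by simp
  qed
  have "\<bar>u x - ?v x\<bar> \<le> 1 / real N" if "x \<in> space M" for x
  proof -
    have "u x - ?v x = (real N * u x - \<lfloor>real N * u x\<rfloor>) / real N"
      using N unfolding count[OF that] by (simp add: field_simps)
    moreover have "0 \<le> real N * u x - \<lfloor>real N * u x\<rfloor>" "real N * u x - \<lfloor>real N * u x\<rfloor> \<le> 1"
      by linarith+
    ultimately show ?thesis
      by (simp add: divide_right_mono)
  qed
  then have "\<bar>expectation (\<lambda>x. u x - ?v x)\<bar> \<le> 1 / real N"
    by (rule abs_integral_le_const)
  moreover have "expectation (\<lambda>x. u x - ?v x) = expectation u - (\<Sum>k=1..N. prob (?A k)) / real N"
  proof -
    have "integrable M u"
      using u by (intro integrable_const_bound[where B=1]) auto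
    moreover have "integrable M (indicator (?A k) :: 'a \<Rightarrow> real)" for k
      using A by (auto simp: less_top[symmetric])
    ultimately show ?thesis
      by (simp add: Bochner_Integration.integral_sum)
  qed
  ultimately show ?thesis
    by simp
qed

lemma integral_diff_le_half_tv_norm:
  fixes u :: "'a \<Rightarrow> real"
  assumes \<mu>: "prob_space \<mu>" and \<nu>: "prob_space \<nu>" and sets_eq: "sets \<nu> = sets \<mu>"
    and u: "u \<in> borel_measurable \<mu>" "\<And>x. x \<in> space \<mu> \<Longrightarrow> 0 \<le> u x \<and> u x \<le> 1"
  shows "\<bar>(\<integral>x. u x \<partial>\<mu>) - (\<integral>x. u x \<partial>\<nu>)\<bar> \<le> tv_norm \<mu> \<nu> / 2"
proof -
  interpret \<mu>: prob_space \<mu> by fact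
  interpret \<nu>: prob_space \<nu> by fact
  let ?s = "SUP A\<in>sets \<mu>. \<bar>measure \<mu> A - measure \<nu> A\<bar>"
  let ?A = "\<lambda>N k. {x \<in> space \<mu>. real k \<le> real N * u x}"
  have space_eq: "space \<nu> = space \<mu>"
    using sets_eq by (rule sets_eq_imp_space_eq)
  have "\<bar>measure \<mu> A - measure \<nu> A\<bar> \<le> 1" for A
    using \<mu>.prob_le_1[of A] \<nu>.prob_le_1[of A] measure_nonneg[of \<mu> A] measure_nonneg[of \<nu> A]
    by linarith
  then have "bdd_above ((\<lambda>A. \<bar>measure \<mu> A - measure \<nu> A\<bar>) ` sets \<mu>)"
    by (intro bdd_aboveI2)
  then have le_s: "\<bar>measure \<mu> A - measure \<nu> A\<bar> \<le> ?s" if "A \<in> sets \<mu>" for A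
    using that by (rule cSUP_upper2) simp
  have "\<bar>(\<integral>x. u x \<partial>\<mu>) - (\<integral>x. u x \<partial>\<nu>)\<bar> \<le> ?s + 2 / real N" if N: "N \<ge> 1" for N
  proof -
    have A: "?A N k \<in> sets \<mu>" for k
      using u(1) by measurable
    have "\<bar>(\<Sum>k=1..N. measure \<mu> (?A N k)) / real N - (\<Sum>k=1..N. measure \<nu> (?A N k)) / real N\<bar>
        \<le> (\<Sum>k=1..N. \<bar>measure \<mu> (?A N k) - measure \<nu> (?A N k)\<bar>) / real N"
      by (simp add: diff_divide_distrib[symmetric] sum_subtractf[symmetric] divide_right_mono)
    also have "\<dots> \<le> (\<Sum>k=1..N. ?s) / real N"
      by (intro divide_right_mono sum_mono le_s A) simp
    also have "\<dots> = ?s"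
      using N by simp
    finally show ?thesis
      using \<mu>.integral_level_sets_approx[OF u N] \<nu>.integral_level_sets_approx[of u N] u N
      by (simp add: space_eq measurable_cong_sets[OF sets_eq refl] abs_le_iff)
  qed
  moreover have "(\<lambda>N. ?s + 2 / real N) \<longlonglongrightarrow> ?s"
    using tendsto_add[OF tendsto_const lim_const_over_n] by simp
  ultimately have "\<bar>(\<integral>x. u x \<partial>\<mu>) - (\<integral>x. u x \<partial>\<nu>)\<bar> \<le> ?s"
    by (intro LIMSEQ_le_const) auto
  then show ?thesis
    unfolding tv_norm_def by simp
qed

lemma integral_diff_le_tv_norm:
  fixes h :: "'a \<Rightarrow> real"
  assumes \<mu>: "prob_space \<mu>" and \<nu>: "prob_space \<nu>" and sets_eq: "sets \<nu> = sets \<mu>"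
    and h: "h \<in> borel_measurable \<mu>" and bound: "\<And>x. x \<in> space \<mu> \<Longrightarrow> \<bar>h x\<bar> \<le> c"
  shows "\<bar>(\<integral>x. h x \<partial>\<mu>) - (\<integral>x. h x \<partial>\<nu>)\<bar> \<le> c * tv_norm \<mu> \<nu>"
proof -
  interpret \<mu>: prob_space \<mu> by fact
  interpret \<nu>: prob_space \<nu> by fact
  have space_eq: "space \<nu> = space \<mu>"
    using sets_eq by (rule sets_eq_imp_space_eq)
  have h_int: "integrable \<mu> h" "integrable \<nu> h"
    using h bound space_eq by (auto intro!: \<mu>.integrable_const_bound[where B=c]
        \<nu>.integrable_const_bound[where B=c] simp: measurable_cong_sets[OF sets_eq refl])
  consider "c = 0" | "c > 0"
    using bound \<mu>.not_empty by fastforce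
  then show ?thesis
  proof cases
    case 1
    then have "(\<integral>x. h x \<partial>\<mu>) = 0" "(\<integral>x. h x \<partial>\<nu>) = 0"
      using bound space_eq by (auto intro!: integral_eq_zero_AE)
    then show ?thesis
      using 1 by simp
  next
    case 2
    define u where "u = (\<lambda>x. (h x + c) / (2 * c))"
    have "(\<integral>x. h x \<partial>\<mu>) - (\<integral>x. h x \<partial>\<nu>) = 2 * c * ((\<integral>x. u x \<partial>\<mu>) - (\<integral>x. u x \<partial>\<nu>))"
      using 2 h_int by (simp add: u_def \<mu>.prob_space \<nu>.prob_space field_simps)
    also have "\<bar>\<dots>\<bar> \<le> 2 * c * (tv_norm \<mu> \<nu> / 2)"
    proof -
      have "\<bar>(\<integral>x. u x \<partial>\<mu>) - (\<integral>x. u x \<partial>\<nu>)\<bar> \<le> tv_norm \<mu> \<nu> / 2"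
      proof (rule integral_diff_le_half_tv_norm[OF \<mu> \<nu> sets_eq])
        show "u \<in> borel_measurable \<mu>"
          unfolding u_def using h by measurable
        show "0 \<le> u x \<and> u x \<le> 1" if "x \<in> space \<mu>" for x
          using bound[OF that] 2 by (auto simp: u_def abs_le_iff field_simps)
      qed
      then show ?thesis
        using 2 by (simp add: abs_mult)
    qed
    finally show ?thesis
      by simp
  qed
qed

lemma abs_inner_le_of_power2_norm_le:
  fixes x y :: "'a::real_inner"
  assumes "(norm x)\<^sup>2 \<le> B" "(norm y)\<^sup>2 \<le> B"
  shows "\<bar>x \<bullet> y\<bar> \<le> B"
proof -
  have "\<bar>x \<bullet> y\<bar> \<le> norm x * norm y"
    by (rule Cauchy_Schwarz_ineq2)
  also have "\<dots> \<le> ((norm x)\<^sup>2 + (norm y)\<^sup>2) / 2"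
    using sum_squares_bound[of "norm x" "norm y"] by simp
  finally show ?thesis
    using assms by simp
qed

lemma power2_norm_sum_eq_inner:
  fixes v :: "'i \<Rightarrow> 'a::real_inner"
  shows "(norm (\<Sum>i\<in>I. v i))\<^sup>2 = (\<Sum>i\<in>I. \<Sum>j\<in>I. v i \<bullet> v j)"
  unfolding power2_norm_eq_inner by (simp add: inner_sum_left inner_sum_right) (rule sum.swap)

lemma sum_power_div_le:
  fixes r :: real
  assumes r: "0 \<le> r" "r < 1" and \<tau>: "\<tau> \<ge> 1"
  shows "(\<Sum>k<N. r ^ (k div \<tau>)) \<le> real \<tau> / (1 - r)"
proof -
  have "(\<Sum>k<N. r ^ (k div \<tau>)) \<le> (\<Sum>k<N * \<tau>. r ^ (k div \<tau>))"
    using r \<tau> by (intro sum_mono2) auto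
  also have "\<dots> = (\<Sum>q<N. \<Sum>k\<in>{q * \<tau>..<q * \<tau> + \<tau>}. r ^ (k div \<tau>))"
    by (rule sum.nat_group[symmetric])
  also have "\<dots> = (\<Sum>q<N. real \<tau> * r ^ q)"
  proof (intro sum.cong refl)
    fix q
    have "k div \<tau> = q" if "k \<in> {q * \<tau>..<q * \<tau> + \<tau>}" for k
      using that \<tau> by (auto intro: div_nat_eqI simp: mult.commute)
    then show "(\<Sum>k\<in>{q * \<tau>..<q * \<tau> + \<tau>}. r ^ (k div \<tau>)) = real \<tau> * r ^ q"
      by simp
  qed
  also have "\<dots> = real \<tau> * ((1 - r ^ N) / (1 - r))"
    using r by (simp add: sum_distrib_left[symmetric] sum_gp_strict)
  also have "\<dots> \<le> real \<tau> / (1 - r)"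
    using r by (simp add: divide_right_mono mult_left_le)
  finally show ?thesis .
qed

lemma sum_power_dist_div_le:
  fixes r :: real
  assumes r: "0 \<le> r" "r < 1" and \<tau>: "\<tau> \<ge> 1" and i: "i \<in> {1..n}"
  shows "(\<Sum>j=1..n. r ^ ((max i j - min i j) div \<tau>)) \<le> 2 * real \<tau> / (1 - r)"
proof -
  let ?f = "\<lambda>k. r ^ (k div \<tau>)"
  have "(\<Sum>j=1..n. ?f (max i j - min i j)) = (\<Sum>j\<in>{i..n}. ?f (j - i)) + (\<Sum>j\<in>{1..<i}. ?f (i - j))"
  proof -
    have "{1..n} = {i..n} \<union> {1..<i}" "{i..n} \<inter> {1..<i} = {}"
      using i by auto
    then have "(\<Sum>j=1..n. ?f (max i j - min i j))
        = (\<Sum>j\<in>{i..n}. ?f (max i j - min i j)) + (\<Sum>j\<in>{1..<i}. ?f (max i j - min i j))"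
      by (simp add: sum.union_disjoint)
    also have "\<dots> = (\<Sum>j\<in>{i..n}. ?f (j - i)) + (\<Sum>j\<in>{1..<i}. ?f (i - j))"
      by (intro arg_cong2[where f="(+)"] sum.cong) auto
    finally show ?thesis .
  qed
  also have "(\<Sum>j\<in>{i..n}. ?f (j - i)) = (\<Sum>k\<in>(\<lambda>j. j - i) ` {i..n}. ?f k)"
    by (subst sum.reindex) (auto simp: inj_on_def)
  also have "\<dots> \<le> (\<Sum>k<n. ?f k)"
    using i r by (intro sum_mono2) auto
  also have "(\<Sum>j\<in>{1..<i}. ?f (i - j)) = (\<Sum>k\<in>(\<lambda>j. i - j) ` {1..<i}. ?f k)"
    by (subst sum.reindex) (auto simp: inj_on_def)
  also have "\<dots> \<le> (\<Sum>k<n. ?f k)"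
    using i r by (intro sum_mono2) auto
  finally show ?thesis
    using sum_power_div_le[OF r \<tau>, of n] by simp
qed

section \<open>Markov chains\<close>

lemma prob_algebra_kernelD:
  assumes "K \<in> N \<rightarrow>\<^sub>M prob_algebra M" "x \<in> space N"
  shows "prob_space (K x)" "sets (K x) = sets M" "space (K x) = space M"
  using measurable_space[OF assms] by (auto simp: space_prob_algebra cong: sets_eq_imp_space_eq)

lemma integral_measurable_subprob_algebra2:
  fixes f :: "'a \<Rightarrow> 'b \<Rightarrow> 'c::{banach, second_countable_topology}"
  assumes f[measurable]: "(\<lambda>(x, y). f x y) \<in> borel_measurable (M \<Otimes>\<^sub>M N)"
    and L[measurable]: "L \<in> M \<rightarrow>\<^sub>M subprob_algebra N"
  shows "(\<lambda>x. integral\<^sup>L (L x) (f x)) \<in> borel_measurable M"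
proof -
  note integral_measurable_subprob_algebra[measurable]
  note measurable_distr2[measurable]
  have "(\<lambda>x. integral\<^sup>L (distr (L x) (M \<Otimes>\<^sub>M N) (\<lambda>y. (x, y))) (\<lambda>(x, y). f x y)) \<in> borel_measurable M"
    by measurable
  then show ?thesis
    by (rule measurable_cong[THEN iffD1, rotated])
       (simp add: integral_distr measurable_Pair1' sets_kernel[OF L] cong: measurable_cong_sets)
qed

lemma integral_bind_prob_kernel:
  fixes h :: "'b \<Rightarrow> real"
  assumes K: "K \<in> M \<rightarrow>\<^sub>M prob_algebra N" and L: "prob_space L" "sets L = sets M"
    and h: "h \<in> borel_measurable N" and bound: "\<And>x. x \<in> space N \<Longrightarrow> \<bar>h x\<bar> \<le> c"
  shows "(\<integral>x. h x \<partial>bind L K) = (\<integral>y. (\<integral>x. h x \<partial>K y) \<partial>L)"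
proof (rule integral_bind[OF h bound])
  show "K \<in> L \<rightarrow>\<^sub>M subprob_algebra N"
    using measurable_prob_algebraD[OF K] L(2) by (simp cong: measurable_cong_sets)
  show "finite_measure L"
    using L(1) by (rule prob_space.finite_measure)
  have "space L = space M"
    using L(2) by (rule sets_eq_imp_space_eq)
  then show "AE y in L. emeasure (K y) (space (K y)) \<le> ennreal 1"
    using prob_algebra_kernelD(1)[OF K] by (auto simp: prob_space.emeasure_space_1)
qed

locale markov_kernel =
  fixes M :: "'z measure" and Q :: "'z \<Rightarrow> 'z measure"
  assumes measurable_Q[measurable]: "Q \<in> M \<rightarrow>\<^sub>M prob_algebra M"
begin

lemma measurable_kernel_pow[measurable]: "kernel_pow M Q k \<in> M \<rightarrow>\<^sub>M prob_algebra M"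
  by (induction k) (simp_all add: measurable_return_prob_space measurable_bind_prob_space measurable_Q)

lemma measurable_chain_step:
  "(\<lambda>w. distr (Q (w n)) (PiM {..Suc n} (\<lambda>_. M)) (\<lambda>z. w(Suc n := z)))
     \<in> PiM {..n} (\<lambda>_. M) \<rightarrow>\<^sub>M prob_algebra (PiM {..Suc n} (\<lambda>_. M))"
proof -
  have [measurable]: "(\<lambda>(w, z). w(Suc n := z)) \<in> PiM {..n} (\<lambda>_. M) \<Otimes>\<^sub>M M \<rightarrow>\<^sub>M PiM {..Suc n} (\<lambda>_. M)"
    unfolding split_beta' by (rule measurable_fun_upd[where J="{..n}"]) auto
  show ?thesis
    by measurable
qed

lemma bind_kernel_pow_invariant:
  assumes "sets \<pi> = sets M" and invariant: "bind \<pi> Q = \<pi>"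
  shows "bind \<pi> (kernel_pow M Q k) = \<pi>"
proof (induction k)
  case 0
  then show ?case
    using assms(1) by (simp add: bind_return'')
next
  case (Suc k)
  have "kernel_pow M Q k \<in> \<pi> \<rightarrow>\<^sub>M subprob_algebra M"
    using measurable_prob_algebraD[OF measurable_kernel_pow] assms(1) by (simp cong: measurable_cong_sets)
  then have "bind \<pi> (kernel_pow M Q (Suc k)) = bind (bind \<pi> (kernel_pow M Q k)) Q"
    by (simp add: bind_assoc[OF _ measurable_prob_algebraD[OF measurable_Q]])
  then show ?case
    using Suc invariant by simp
qed

context
  fixes \<xi> :: "'z measure"
  assumes prob_space_\<xi>: "prob_space \<xi>" and sets_\<xi>: "sets \<xi> = sets M"
begin

lemma chain_law_in_prob_algebra:
  "chain_law M Q \<xi> n \<in> space (prob_algebra (PiM {..n} (\<lambda>_. M)))"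
proof (induction n)
  case 0
  have "(\<lambda>z. \<lambda>i\<in>{..0::nat}. z) \<in> \<xi> \<rightarrow>\<^sub>M PiM {..0} (\<lambda>_. M)"
    by (rule measurable_restrict) (simp add: sets_\<xi> measurable_ident_sets)
  then show ?case
    using prob_space_\<xi> by (auto simp: space_prob_algebra intro: prob_space.prob_space_distr)
next
  case (Suc n)
  then show ?case
    using measurable_chain_step[of n] by (auto simp: space_prob_algebra prob_space_bind' sets_bind')
qed

lemma prob_space_chain_law: "prob_space (chain_law M Q \<xi> n)"
  and sets_chain_law: "sets (chain_law M Q \<xi> n) = sets (PiM {..n} (\<lambda>_. M))"
  using chain_law_in_prob_algebra[of n] by (auto simp: space_prob_algebra)

lemma space_chain_law: "space (chain_law M Q \<xi> n) = space (PiM {..n} (\<lambda>_. M))"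
  using sets_chain_law by (rule sets_eq_imp_space_eq)

lemma integral_chain_law_Suc:
  fixes f :: "(nat \<Rightarrow> 'z) \<Rightarrow> real"
  assumes f: "f \<in> borel_measurable (PiM {..Suc n} (\<lambda>_. M))"
    and bound: "\<And>w. w \<in> space (PiM {..Suc n} (\<lambda>_. M)) \<Longrightarrow> \<bar>f w\<bar> \<le> c"
  shows "(\<integral>w. f w \<partial>chain_law M Q \<xi> (Suc n))
       = (\<integral>w. (\<integral>z. f (w(Suc n := z)) \<partial>Q (w n)) \<partial>chain_law M Q \<xi> n)"
proof -
  have "(\<integral>w. f w \<partial>chain_law M Q \<xi> (Suc n))
      = (\<integral>w. (\<integral>v. f v \<partial>distr (Q (w n)) (PiM {..Suc n} (\<lambda>_. M)) (\<lambda>z. w(Suc n := z))) \<partial>chain_law M Q \<xi> n)"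
    unfolding chain_law.simps
    by (rule integral_bind_prob_kernel[OF measurable_chain_step prob_space_chain_law sets_chain_law f bound])
  also have "\<dots> = (\<integral>w. (\<integral>z. f (w(Suc n := z)) \<partial>Q (w n)) \<partial>chain_law M Q \<xi> n)"
  proof (intro Bochner_Integration.integral_cong refl integral_distr f)
    fix w assume "w \<in> space (chain_law M Q \<xi> n)"
    then have w: "w \<in> space (PiM {..n} (\<lambda>_. M))"
      by (simp add: space_chain_law)
    then have "sets (Q (w n)) = sets M"
      by (intro prob_algebra_kernelD(2)[OF measurable_Q]) (simp add: space_PiM PiE_iff)
    moreover have "(\<lambda>z. w(Suc n := z)) \<in> M \<rightarrow>\<^sub>M PiM {..Suc n} (\<lambda>_. M)"
      using w by (intro measurable_fun_upd[where J="{..n}"]) auto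
    ultimately show "(\<lambda>z. w(Suc n := z)) \<in> Q (w n) \<rightarrow>\<^sub>M PiM {..Suc n} (\<lambda>_. M)"
      by (simp cong: measurable_cong_sets)
  qed
  finally show ?thesis .
qed

lemma integral_chain_law_mean_sq_eq:
  fixes g :: "'z \<Rightarrow> 'a::{real_inner, banach, second_countable_topology}"
  assumes g[measurable]: "g \<in> borel_measurable M" and bound: "\<And>z. z \<in> space M \<Longrightarrow> (norm (g z))\<^sup>2 \<le> B"
  shows "(\<integral>w. (norm ((1 / real n) *\<^sub>R (\<Sum>i=1..n. g (w i))))\<^sup>2 \<partial>chain_law M Q \<xi> n)
       = (1 / real n)\<^sup>2 * (\<Sum>i=1..n. \<Sum>j=1..n. \<integral>w. g (w i) \<bullet> g (w j) \<partial>chain_law M Q \<xi> n)"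
proof -
  interpret chain: prob_space "chain_law M Q \<xi> n"
    by (rule prob_space_chain_law)
  have integrable_inner: "integrable (chain_law M Q \<xi> n) (\<lambda>w. g (w i) \<bullet> g (w j))"
    if "i \<le> n" "j \<le> n" for i j
  proof (rule chain.integrable_const_bound[where B=B])
    show "(\<lambda>w. g (w i) \<bullet> g (w j)) \<in> borel_measurable (chain_law M Q \<xi> n)"
      using that sets_chain_law by (simp cong: measurable_cong_sets)
    show "AE w in chain_law M Q \<xi> n. norm (g (w i) \<bullet> g (w j)) \<le> B"
      using that bound
      by (auto simp: space_chain_law space_PiM PiE_iff intro!: abs_inner_le_of_power2_norm_le)
  qed
  have "(\<integral>w. (\<Sum>i=1..n. \<Sum>j=1..n. g (w i) \<bullet> g (w j)) \<partial>chain_law M Q \<xi> n)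
      = (\<Sum>i=1..n. \<integral>w. (\<Sum>j=1..n. g (w i) \<bullet> g (w j)) \<partial>chain_law M Q \<xi> n)"
    by (rule Bochner_Integration.integral_sum) (auto intro!: integrable_inner)
  also have "\<dots> = (\<Sum>i=1..n. \<Sum>j=1..n. \<integral>w. g (w i) \<bullet> g (w j) \<partial>chain_law M Q \<xi> n)"
    by (intro sum.cong refl Bochner_Integration.integral_sum) (auto intro!: integrable_inner)
  finally show ?thesis
    by (simp add: power2_norm_sum_eq_inner power_divide)
qed

lemma integral_chain_law_add:
  fixes \<phi> :: "'z \<Rightarrow> 'z \<Rightarrow> real"
  assumes \<phi>[measurable]: "(\<lambda>(a, b). \<phi> a b) \<in> borel_measurable (M \<Otimes>\<^sub>M M)"
    and bound: "\<And>a b. a \<in> space M \<Longrightarrow> b \<in> space M \<Longrightarrow> \<bar>\<phi> a b\<bar> \<le> c"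
    and ij: "i \<le> n" "j \<le> n"
  shows "(\<integral>w. \<phi> (w i) (w j) \<partial>chain_law M Q \<xi> (n + m)) = (\<integral>w. \<phi> (w i) (w j) \<partial>chain_law M Q \<xi> n)"
proof (induction m)
  case (Suc m)
  have "(\<integral>w. \<phi> (w i) (w j) \<partial>chain_law M Q \<xi> (Suc (n + m)))
      = (\<integral>w. (\<integral>z. \<phi> ((w(Suc (n + m) := z)) i) ((w(Suc (n + m) := z)) j) \<partial>Q (w (n + m)))
           \<partial>chain_law M Q \<xi> (n + m))"
    using ij by (intro integral_chain_law_Suc[where c=c]) (auto simp: space_PiM PiE_iff bound)
  also have "\<dots> = (\<integral>w. \<phi> (w i) (w j) \<partial>chain_law M Q \<xi> (n + m))"
  proof (intro Bochner_Integration.integral_cong refl)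
    fix w assume "w \<in> space (chain_law M Q \<xi> (n + m))"
    then have "prob_space (Q (w (n + m)))"
      by (intro prob_algebra_kernelD(1)[OF measurable_Q]) (simp add: space_chain_law space_PiM PiE_iff)
    then show "(\<integral>z. \<phi> ((w(Suc (n + m) := z)) i) ((w(Suc (n + m) := z)) j) \<partial>Q (w (n + m))) = \<phi> (w i) (w j)"
      using ij by (simp add: prob_space.prob_space)
  qed
  finally show ?case
    using Suc by simp
qed simp

lemma integral_chain_law_kernel_pow:
  fixes \<phi> :: "'z \<Rightarrow> 'z \<Rightarrow> real"
  assumes "(\<lambda>(a, b). \<phi> a b) \<in> borel_measurable (M \<Otimes>\<^sub>M M)"
    and "\<And>a b. a \<in> space M \<Longrightarrow> b \<in> space M \<Longrightarrow> \<bar>\<phi> a b\<bar> \<le> c"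
  shows "(\<integral>w. \<phi> (w i) (w (i + k)) \<partial>chain_law M Q \<xi> (i + k))
       = (\<integral>w. (\<integral>u. \<phi> (w i) u \<partial>kernel_pow M Q k (w i)) \<partial>chain_law M Q \<xi> i)"
  using assms
proof (induction k arbitrary: \<phi>)
  case 0
  have "\<phi> (w i) (w i) = (\<integral>u. \<phi> (w i) u \<partial>return M (w i))" if "w \<in> space (chain_law M Q \<xi> i)" for w
    using that 0(1) by (intro integral_return[symmetric]) (auto simp: space_chain_law space_PiM PiE_iff)
  then show ?case
    by (simp cong: Bochner_Integration.integral_cong)
next
  case (Suc k)
  note measurable_\<phi>[measurable] = Suc.prems(1) and bound_\<phi> = Suc.prems(2)
  define \<psi> where "\<psi> a y = (\<integral>z. \<phi> a z \<partial>Q y)" for a y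
  have "(\<lambda>(a, y). \<psi> a y) \<in> borel_measurable (M \<Otimes>\<^sub>M M)"
  proof -
    have "(\<lambda>p. \<integral>z. \<phi> (fst p) z \<partial>Q (snd p)) \<in> borel_measurable (M \<Otimes>\<^sub>M M)"
      by (rule integral_measurable_subprob_algebra2[where N=M]) (measurable, auto intro: measurable_prob_algebraD)
    then show ?thesis
      by (simp add: \<psi>_def split_beta')
  qed
  moreover have "\<bar>\<psi> a y\<bar> \<le> c" if "a \<in> space M" "y \<in> space M" for a y
    unfolding \<psi>_def using that bound_\<phi> prob_algebra_kernelD[OF measurable_Q]
    by (intro prob_space.abs_integral_le_const) auto
  ultimately have IH: "(\<integral>w. \<psi> (w i) (w (i + k)) \<partial>chain_law M Q \<xi> (i + k))
      = (\<integral>w. (\<integral>u. \<psi> (w i) u \<partial>kernel_pow M Q k (w i)) \<partial>chain_law M Q \<xi> i)"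
    by (rule Suc.IH)
  have "(\<integral>w. \<phi> (w i) (w (i + Suc k)) \<partial>chain_law M Q \<xi> (i + Suc k))
      = (\<integral>w. \<psi> (w i) (w (i + k)) \<partial>chain_law M Q \<xi> (i + k))"
    unfolding add_Suc_right \<psi>_def
    by (subst integral_chain_law_Suc[where c=c]) (auto simp: space_PiM PiE_iff bound_\<phi>)
  also have "\<dots> = (\<integral>w. (\<integral>u. \<phi> (w i) u \<partial>kernel_pow M Q (Suc k) (w i)) \<partial>chain_law M Q \<xi> i)"
    unfolding IH
  proof (rule Bochner_Integration.integral_cong[OF refl])
    fix w assume "w \<in> space (chain_law M Q \<xi> i)"
    then have w_i: "w i \<in> space M"
      by (simp add: space_chain_law space_PiM PiE_iff)
    have "(\<lambda>u. \<phi> (w i) u) \<in> borel_measurable M"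
      using w_i by measurable
    then show "(\<integral>u. \<psi> (w i) u \<partial>kernel_pow M Q k (w i)) = (\<integral>u. \<phi> (w i) u \<partial>kernel_pow M Q (Suc k) (w i))"
      unfolding \<psi>_def kernel_pow.simps using bound_\<phi> w_i
        integral_bind_prob_kernel[OF measurable_Q prob_algebra_kernelD(1,2)[OF measurable_kernel_pow w_i],
          of "\<phi> (w i)" c]
      by simp
  qed
  finally show ?case .
qed

end

end

locale uniformly_ergodic_chain = markov_kernel +
  fixes \<pi> :: "'z measure" and \<tau> :: nat
  assumes prob_space_\<pi>: "prob_space \<pi>" and sets_\<pi>: "sets \<pi> = sets M"
    and invariant: "bind \<pi> Q = \<pi>"
    and mixing_time_pos: "\<tau> \<ge> 1"
    and mixing: "\<And>k z z'. z \<in> space M \<Longrightarrow> z' \<in> space M \<Longrightarrow>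
      tv_norm (kernel_pow M Q k z) (kernel_pow M Q k z') / 2 \<le> (1/4) ^ (k div \<tau>)"
begin

lemma space_nonempty: "space M \<noteq> {}"
  using prob_space.not_empty[OF prob_space_\<pi>] sets_eq_imp_space_eq[OF sets_\<pi>] by simp

lemma abs_integral_kernel_pow_le:
  fixes h :: "'z \<Rightarrow> real"
  assumes h[measurable]: "h \<in> borel_measurable M" and bound: "\<And>x. x \<in> space M \<Longrightarrow> \<bar>h x\<bar> \<le> c"
    and centered: "(\<integral>x. h x \<partial>\<pi>) = 0" and z: "z \<in> space M"
  shows "\<bar>\<integral>x. h x \<partial>kernel_pow M Q k z\<bar> \<le> 2 * c * (1/4) ^ (k div \<tau>)"
proof -
  interpret \<pi>: prob_space \<pi>
    by (rule prob_space_\<pi>)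
  let ?g = "\<lambda>z. \<integral>x. h x \<partial>kernel_pow M Q k z"
  have space_\<pi>: "space \<pi> = space M"
    using sets_\<pi> by (rule sets_eq_imp_space_eq)
  have g_measurable: "?g \<in> borel_measurable \<pi>"
    using measurable_prob_algebraD[OF measurable_kernel_pow] sets_\<pi>
    by (simp cong: measurable_cong_sets)
  have g_bound: "\<bar>?g y\<bar> \<le> c" if "y \<in> space M" for y
    using bound prob_algebra_kernelD[OF measurable_kernel_pow that]
    by (intro prob_space.abs_integral_le_const) auto
  have "(\<integral>y. ?g y \<partial>\<pi>) = (\<integral>x. h x \<partial>bind \<pi> (kernel_pow M Q k))"
    by (rule integral_bind_prob_kernel[OF measurable_kernel_pow prob_space_\<pi> sets_\<pi> h bound, symmetric])
  also have "\<dots> = 0"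
    using bind_kernel_pow_invariant[OF sets_\<pi> invariant] centered by simp
  finally have "?g z = (\<integral>y. ?g z - ?g y \<partial>\<pi>)"
    using g_measurable g_bound space_\<pi>
    by (subst Bochner_Integration.integral_diff)
      (auto intro!: \<pi>.integrable_const_bound[where B=c] simp: \<pi>.prob_space[unfolded space_\<pi>])
  also have "\<bar>\<dots>\<bar> \<le> c * (2 * (1/4) ^ (k div \<tau>))"
  proof (rule \<pi>.abs_integral_le_const)
    fix y assume "y \<in> space \<pi>"
    then have y: "y \<in> space M"
      by (simp add: space_\<pi>)
    have "\<bar>?g z - ?g y\<bar> \<le> c * tv_norm (kernel_pow M Q k z) (kernel_pow M Q k y)"
    proof (rule integral_diff_le_tv_norm)
      show "h \<in> borel_measurable (kernel_pow M Q k z)"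
        using h prob_algebra_kernelD(2)[OF measurable_kernel_pow z] by (simp cong: measurable_cong_sets)
    qed (use prob_algebra_kernelD[OF measurable_kernel_pow z] prob_algebra_kernelD[OF measurable_kernel_pow y]
        bound in auto)
    also have "\<dots> \<le> c * (2 * (1/4) ^ (k div \<tau>))"
      using mixing[OF z y, of k] bound[OF z] by (intro mult_left_mono) auto
    finally show "\<bar>?g z - ?g y\<bar> \<le> c * (2 * (1/4) ^ (k div \<tau>))" .
  qed
  finally show ?thesis
    by simp
qed

context
  fixes \<xi> :: "'z measure"
  assumes prob_space_\<xi>: "prob_space \<xi>" and sets_\<xi>: "sets \<xi> = sets M"
begin

lemma abs_integral_chain_law_pair_le:
  fixes \<phi> :: "'z \<Rightarrow> 'z \<Rightarrow> real"
  assumes \<phi>[measurable]: "(\<lambda>(a, b). \<phi> a b) \<in> borel_measurable (M \<Otimes>\<^sub>M M)"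
    and bound: "\<And>a b. a \<in> space M \<Longrightarrow> b \<in> space M \<Longrightarrow> \<bar>\<phi> a b\<bar> \<le> c"
    and centered: "\<And>a. a \<in> space M \<Longrightarrow> (\<integral>u. \<phi> a u \<partial>\<pi>) = 0"
    and ij: "i \<le> j" "j \<le> n"
  shows "\<bar>\<integral>w. \<phi> (w i) (w j) \<partial>chain_law M Q \<xi> n\<bar> \<le> 2 * c * (1/4) ^ ((j - i) div \<tau>)"
proof -
  interpret chain_i: prob_space "chain_law M Q \<xi> i"
    by (rule prob_space_chain_law[OF prob_space_\<xi> sets_\<xi>])
  have "(\<integral>w. \<phi> (w i) (w j) \<partial>chain_law M Q \<xi> n) = (\<integral>w. \<phi> (w i) (w j) \<partial>chain_law M Q \<xi> j)"
    using integral_chain_law_add[OF prob_space_\<xi> sets_\<xi> \<phi> bound, where n=j and m="n - j"] ij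
    by simp
  also have "\<dots> = (\<integral>w. (\<integral>u. \<phi> (w i) u \<partial>kernel_pow M Q (j - i) (w i)) \<partial>chain_law M Q \<xi> i)"
    using integral_chain_law_kernel_pow[OF prob_space_\<xi> sets_\<xi> \<phi> bound, where i=i and k="j - i"] ij
    by simp
  also have "\<bar>\<dots>\<bar> \<le> 2 * c * (1/4) ^ ((j - i) div \<tau>)"
  proof (rule chain_i.abs_integral_le_const)
    fix w assume "w \<in> space (chain_law M Q \<xi> i)"
    then have w_i: "w i \<in> space M"
      by (simp add: space_chain_law[OF prob_space_\<xi> sets_\<xi>] space_PiM PiE_iff)
    then have "(\<lambda>u. \<phi> (w i) u) \<in> borel_measurable M"
      by measurable
    then show "\<bar>\<integral>u. \<phi> (w i) u \<partial>kernel_pow M Q (j - i) (w i)\<bar> \<le> 2 * c * (1/4) ^ ((j - i) div \<tau>)"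
      using w_i bound centered by (intro abs_integral_kernel_pow_le) auto
  qed
  finally show ?thesis .
qed

lemma abs_integral_chain_law_inner_le:
  fixes g :: "'z \<Rightarrow> 'a::{real_inner, banach, second_countable_topology}"
  assumes g[measurable]: "g \<in> borel_measurable M" and bound: "\<And>z. z \<in> space M \<Longrightarrow> (norm (g z))\<^sup>2 \<le> B"
    and integrable: "integrable \<pi> g" and centered: "(\<integral>z. g z \<partial>\<pi>) = 0"
    and ij: "i \<le> n" "j \<le> n"
  shows "\<bar>\<integral>w. g (w i) \<bullet> g (w j) \<partial>chain_law M Q \<xi> n\<bar> \<le> 2 * B * (1/4) ^ ((max i j - min i j) div \<tau>)"
proof -
  have inner_measurable: "(\<lambda>(a, b). g a \<bullet> g b) \<in> borel_measurable (M \<Otimes>\<^sub>M M)"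
    by measurable
  have inner_bound: "\<bar>g a \<bullet> g b\<bar> \<le> B" if "a \<in> space M" "b \<in> space M" for a b
    using that bound by (intro abs_inner_le_of_power2_norm_le)
  have inner_centered: "(\<integral>u. g a \<bullet> g u \<partial>\<pi>) = 0" for a
    using integrable centered by simp
  show ?thesis
  proof (cases "i \<le> j")
    case True
    then show ?thesis
      using abs_integral_chain_law_pair_le[OF inner_measurable inner_bound inner_centered, of i j n] ij
      by simp
  next
    case False
    then show ?thesis
      using abs_integral_chain_law_pair_le[OF inner_measurable inner_bound inner_centered, of j i n] ij
      by (simp add: inner_commute)
  qed
qed

lemma chain_mean_sq_le:
  fixes g :: "'z \<Rightarrow> 'a::{real_inner, banach, second_countable_topology}"
  assumes g[measurable]: "g \<in> borel_measurable M" and bound: "\<And>z. z \<in> space M \<Longrightarrow> (norm (g z))\<^sup>2 \<le> B"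
    and integrable: "integrable \<pi> g" and centered: "(\<integral>z. g z \<partial>\<pi>) = 0"
    and n: "n \<ge> 1"
  shows "(\<integral>w. (norm ((1 / real n) *\<^sub>R (\<Sum>i=1..n. g (w i))))\<^sup>2 \<partial>chain_law M Q \<xi> n)
           \<le> 8 * real \<tau> / real n * B"
proof -
  obtain z where "z \<in> space M"
    using space_nonempty by blast
  then have B: "B \<ge> 0"
    using bound by (meson order_trans zero_le_power2)
  have "(\<integral>w. (norm ((1 / real n) *\<^sub>R (\<Sum>i=1..n. g (w i))))\<^sup>2 \<partial>chain_law M Q \<xi> n)
      = (1 / real n)\<^sup>2 * (\<Sum>i=1..n. \<Sum>j=1..n. \<integral>w. g (w i) \<bullet> g (w j) \<partial>chain_law M Q \<xi> n)"
    by (rule integral_chain_law_mean_sq_eq[OF prob_space_\<xi> sets_\<xi> g bound])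
  also have "\<dots> \<le> (1 / real n)\<^sup>2 * (\<Sum>i=1..n. \<Sum>j=1..n. 2 * B * (1/4) ^ ((max i j - min i j) div \<tau>))"
    using abs_integral_chain_law_inner_le[OF g bound integrable centered]
    by (intro mult_left_mono sum_mono) (auto simp: abs_le_iff)
  also have "\<dots> \<le> (1 / real n)\<^sup>2 * (\<Sum>i=1..n. 2 * B * (2 * real \<tau> / (1 - 1/4)))"
  proof (intro mult_left_mono sum_mono)
    fix i assume "i \<in> {1..n}"
    then have "(\<Sum>j=1..n. (1/4::real) ^ ((max i j - min i j) div \<tau>)) \<le> 2 * real \<tau> / (1 - 1/4)"
      using mixing_time_pos by (intro sum_power_dist_div_le) auto
    then show "(\<Sum>j=1..n. 2 * B * (1/4) ^ ((max i j - min i j) div \<tau>)) \<le> 2 * B * (2 * real \<tau> / (1 - 1/4))"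
      using B by (subst sum_distrib_left[symmetric]) (rule mult_left_mono, auto)
  qed simp
  also have "\<dots> \<le> 8 * real \<tau> / real n * B"
    using n B by (simp add: power2_eq_square field_simps)
  finally show ?thesis .
qed

lemma chain_sample_mean_sq_error_le:
  fixes G :: "'z \<Rightarrow> 'a::{real_inner, banach, second_countable_topology}"
  assumes G[measurable]: "G \<in> borel_measurable M" and integrable: "integrable \<pi> G"
    and mean: "(\<integral>z. G z \<partial>\<pi>) = m" and bound: "\<And>z. z \<in> space M \<Longrightarrow> (norm (G z - m))\<^sup>2 \<le> B"
    and n: "n \<ge> 1"
  shows "(\<integral>w. (norm ((1 / real n) *\<^sub>R (\<Sum>i=1..n. G (w i)) - m))\<^sup>2 \<partial>chain_law M Q \<xi> n)
           \<le> 8 * real \<tau> / real n * B"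
proof -
  interpret \<pi>: prob_space \<pi>
    by (rule prob_space_\<pi>)
  have "(\<integral>w. (norm ((1 / real n) *\<^sub>R (\<Sum>i=1..n. G (w i) - m)))\<^sup>2 \<partial>chain_law M Q \<xi> n)
      \<le> 8 * real \<tau> / real n * B"
  proof (rule chain_mean_sq_le[OF _ bound _ _ n])
    show "(\<lambda>z. G z - m) \<in> borel_measurable M"
      by measurable
    show "integrable \<pi> (\<lambda>z. G z - m)"
      using integrable by simp
    then show "(\<integral>z. G z - m \<partial>\<pi>) = 0"
      using integrable mean by (simp add: \<pi>.prob_space)
  qed
  moreover have "(1 / real n) *\<^sub>R (\<Sum>i=1..n. G (w i)) - m = (1 / real n) *\<^sub>R (\<Sum>i=1..n. G (w i) - m)" for w
    using n by (simp add: sum_subtractf sum_constant_scaleR scaleR_diff_right del: sum_constant)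
  ultimately show ?thesis
    by simp
qed

end

end

theorem lemma1:
  fixes Q :: "'z::polish_space \<Rightarrow> 'z measure"
    and \<pi> :: "'z measure"
    and \<tau> :: nat
    and F :: "real ^ 'd \<Rightarrow> 'z \<Rightarrow> real"
    and gradF :: "real ^ 'd \<Rightarrow> 'z \<Rightarrow> real ^ 'd"
    and f :: "real ^ 'd \<Rightarrow> real"
    and gradf :: "real ^ 'd \<Rightarrow> real ^ 'd"
    and \<sigma> \<delta> :: real
  assumes kernel: "Q \<in> borel \<rightarrow>\<^sub>M prob_algebra borel"
    and pi_prob: "prob_space \<pi>" and pi_sets: "sets \<pi> = sets borel"
    and pi_inv: "bind \<pi> Q = \<pi>"
    and pi_unique: "\<And>\<nu>. prob_space \<nu> \<Longrightarrow> sets \<nu> = sets borel \<Longrightarrow> bind \<nu> Q = \<nu> \<Longrightarrow> \<nu> = \<pi>"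
    and tau_pos: "\<tau> \<ge> 1"
    and mixing: "\<And>k z z'. tv_norm (kernel_pow borel Q k z) (kernel_pow borel Q k z') / 2
                    \<le> (1/4) ^ (k div \<tau>)"
    and F_meas: "\<And>x. F x \<in> borel_measurable borel"
    and F_int: "\<And>x. integrable \<pi> (F x)"
    and F_grad: "\<And>x z. GDERIV (\<lambda>y. F y z) x :> gradF x z"
    and gradF_meas: "\<And>x. gradF x \<in> borel_measurable borel"
    and f_def: "\<And>x. f x = (\<integral>z. F x z \<partial>\<pi>)"
    and f_grad: "\<And>x. GDERIV f x :> gradf x"
    and unbiased: "\<And>x. integrable \<pi> (gradF x) \<and> (\<integral>z. gradF x z \<partial>\<pi>) = gradf x"
    and sigma_nonneg: "\<sigma> \<ge> 0" and delta_nonneg: "\<delta> \<ge> 0"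
    and noise: "\<And>z x. (norm (gradF x z - gradf x))\<^sup>2 \<le> \<sigma>\<^sup>2 + \<delta>\<^sup>2 * (norm (gradf x))\<^sup>2"
  shows "\<forall>n::nat. \<forall>x. n \<ge> 1 \<longrightarrow>
      (\<integral>w. (norm ((1 / real n) *\<^sub>R (\<Sum>i=1..n. gradF x (w i)) - gradf x))\<^sup>2
          \<partial>(chain_law borel Q \<pi> n))
        \<le> 8 * real \<tau> / real n * (\<sigma>\<^sup>2 + \<delta>\<^sup>2 * (norm (gradf x))\<^sup>2)
      \<and> (\<forall>\<xi>. prob_space \<xi> \<and> sets \<xi> = sets borel \<longrightarrow>
           (\<integral>w. (norm ((1 / real n) *\<^sub>R (\<Sum>i=1..n. gradF x (w i)) - gradf x))\<^sup>2
              \<partial>(chain_law borel Q \<xi> n))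
            \<le> 16 * (1 + 1 / (ln 4)\<^sup>2) * real \<tau> / real n * (\<sigma>\<^sup>2 + \<delta>\<^sup>2 * (norm (gradf x))\<^sup>2))"
proof -
  \<comment> \<open>Only unbiasedness and the uniform noise bound enter.\<close>
  interpret uniformly_ergodic_chain borel Q \<pi> \<tau>
    by (intro uniformly_ergodic_chain.intro markov_kernel.intro uniformly_ergodic_chain_axioms.intro)
      (rule kernel pi_prob pi_sets pi_inv tau_pos mixing)+
  have mean_sq: "(\<integral>w. (norm ((1 / real n) *\<^sub>R (\<Sum>i=1..n. gradF x (w i)) - gradf x))\<^sup>2
        \<partial>chain_law borel Q \<xi> n) \<le> 8 * real \<tau> / real n * (\<sigma>\<^sup>2 + \<delta>\<^sup>2 * (norm (gradf x))\<^sup>2)"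
    if "n \<ge> 1" "prob_space \<xi>" "sets \<xi> = sets borel" for n x \<xi>
    using that gradF_meas unbiased noise by (intro chain_sample_mean_sq_error_le) auto
  have "(8::real) \<le> 16 * (1 + 1 / (ln 4)\<^sup>2)"
    by simp
  then have C\<^sub>1: "8 * real \<tau> / real n * B \<le> 16 * (1 + 1 / (ln 4)\<^sup>2) * real \<tau> / real n * B"
    if "B \<ge> 0" for n and B :: real
    using that by (intro mult_right_mono divide_right_mono) auto
  show ?thesis
    using mean_sq[OF _ pi_prob pi_sets] order_trans[OF mean_sq C\<^sub>1] by simp
qed

end
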